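(* Let $\Omega=\{\Sigma_1,\dots,\Sigma_n\}$ be a distribution of a finite alphabet $\Sigma$ and let $\mathcal L\subseteq\Sigma^\star$ be a product language over $\Omega$. Fix $i$, write $\Gamma=\bigcup_{j\ne i}\Sigma_j$, and for each $j\neq i$ let $O_j\subseteq\mathcal L|_{\Sigma_j}$. Let $\sigma\in\Sigma_i^\star$ and $\sigma'\in\|_{j\neq i}(O_j,\Sigma_j)$ satisfy $\sigma'|_{\Sigma_i}=\sigma|_{\Gamma}$, and let $\sigma_{int}\in(\{\sigma\},\Sigma_i)\,\|\,(\{\sigma'\},\Gamma)$. Then $\sigma\in\mathcal L|_{\Sigma_i}$ if and only if $\sigma_{int}\in\mathcal L$.
   Context: $\sigma|_{\Sigma'}$ denotes the projection of a word onto $\Sigma'$ (the subsequence of symbols lying in $\Sigma'$), lifted elementwise to sets. For languages $\mathcal L_k\subseteq A_k^\star$, $\|_{k}(\mathcal L_k,A_k)=\{w\in(\bigcup_kA_k)^\star\mid\forall k.\ w|_{A_k}\in\mathcal L_k\}$. A distribution of $\Sigma$ is a finite set $\Omega=\{\Sigma_1,\dots,\Sigma_n\}$ of subsets with union $\Sigma$. $\mathcal L\subseteq\Sigma^\star$ is a product language over $\Omega$ if $\mathcal L=\|_{i=1}^n(\mathcal L_i,\Sigma_i)$ for some $\mathcal L_i\subseteq\Sigma_i^\star$. *)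

theory Defs
  imports Main
begin

definition proj :: "'a list \<Rightarrow> 'a set \<Rightarrow> 'a list" where
  "proj w S = filter (\<lambda>a. a \<in> S) w"

definition projL :: "'a list set \<Rightarrow> 'a set \<Rightarrow> 'a list set" where
  "projL L S = (\<lambda>w. proj w S) ` L"

definition par :: "'i set \<Rightarrow> ('i \<Rightarrow> 'a list set) \<Rightarrow> ('i \<Rightarrow> 'a set) \<Rightarrow> 'a list set" where
  "par I L A = {w. w \<in> lists (\<Union>k\<in>I. A k) \<and> (\<forall>k\<in>I. proj w (A k) \<in> L k)}"

definition par2 :: "'a list set \<Rightarrow> 'a set \<Rightarrow> 'a list set \<Rightarrow> 'a set \<Rightarrow> 'a list set" where
  "par2 L1 A1 L2 A2 = par UNIV (\<lambda>b. if b then L1 else L2) (\<lambda>b. if b then A1 else A2)"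

definition distribution :: "'a set \<Rightarrow> nat \<Rightarrow> (nat \<Rightarrow> 'a set) \<Rightarrow> bool" where
  "distribution Alph n Sig \<longleftrightarrow> (\<Union>k\<in>{1..n}. Sig k) = Alph"

definition product_language :: "nat \<Rightarrow> (nat \<Rightarrow> 'a set) \<Rightarrow> 'a list set \<Rightarrow> bool" where
  "product_language n Sig L \<longleftrightarrow>
     (\<exists>Lk. (\<forall>k\<in>{1..n}. Lk k \<subseteq> lists (Sig k)) \<and> L = par {1..n} Lk Sig)"

end

theory Submission
  imports Defs
begin

text \<open>A product language contains every word all of whose local projections are projections of
  words of the language. The interleaving \<open>\<sigma>_int\<close> projects to \<open>\<sigma>\<close> on \<open>\<Sigma>\<^sub>i\<close> and, for \<open>j \<noteq> i\<close>,
  to the projection of \<open>\<sigma>'\<close> onto \<open>\<Sigma>\<^sub>j\<close>, which lies in \<open>O\<^sub>j \<subseteq> \<L>|\<^sub>\<Sigma>\<^sub>j\<close>; so \<open>\<sigma>_int \<in> \<L>\<close> as soon as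
  \<open>\<sigma> \<in> \<L>|\<^sub>\<Sigma>\<^sub>i\<close>. Conversely \<open>\<sigma>\<close> is itself the projection of \<open>\<sigma>_int\<close>.\<close>

lemma proj_proj_subset: "B \<subseteq> A \<Longrightarrow> proj (proj w A) B = proj w B"
  unfolding proj_def by (induction w) auto

lemma par2_singletons_iff:
  "w \<in> par2 {u} A {v} B \<longleftrightarrow> w \<in> lists (A \<union> B) \<and> proj w A = u \<and> proj w B = v"
  unfolding par2_def par_def by (auto simp: UNIV_bool)

lemma par_closed_under_projections:
  assumes "w \<in> lists (\<Union>k\<in>I. A k)"
    and "\<And>k. k \<in> I \<Longrightarrow> proj w (A k) \<in> projL (par I L A) (A k)"
  shows "w \<in> par I L A"
proof -
  have "proj w (A k) \<in> L k" if k: "k \<in> I" for k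
  proof -
    obtain u where "u \<in> par I L A" "proj w (A k) = proj u (A k)"
      using assms(2)[OF k] unfolding projL_def by auto
    then show ?thesis using k unfolding par_def by auto
  qed
  then show ?thesis using assms(1) unfolding par_def by auto
qed

theorem mainTheorem4:
  fixes Alph :: "'a set" and n :: nat and Sig :: "nat \<Rightarrow> 'a set"
    and L :: "'a list set" and i :: nat and Obs :: "nat \<Rightarrow> 'a list set"
    and \<sigma> \<sigma>' \<sigma>_int :: "'a list"
  assumes "finite Alph"
    and "distribution Alph n Sig"
    and "product_language n Sig L"
    and "i \<in> {1..n}"
    and "\<forall>j\<in>{1..n} - {i}. Obs j \<subseteq> projL L (Sig j)"
    and "\<sigma> \<in> lists (Sig i)"
    and "\<sigma>' \<in> par ({1..n} - {i}) Obs Sig"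
    and "proj \<sigma>' (Sig i) = proj \<sigma> (\<Union>j\<in>{1..n} - {i}. Sig j)"
    and "\<sigma>_int \<in> par2 {\<sigma>} (Sig i) {\<sigma>'} (\<Union>j\<in>{1..n} - {i}. Sig j)"
  shows "\<sigma> \<in> projL L (Sig i) \<longleftrightarrow> \<sigma>_int \<in> L"
proof
  define \<Gamma> where "\<Gamma> = (\<Union>j\<in>{1..n} - {i}. Sig j)"
  obtain Lk where L: "L = par {1..n} Lk Sig"
    using assms(3) unfolding product_language_def by blast
  have int: "\<sigma>_int \<in> lists (Sig i \<union> \<Gamma>)" "proj \<sigma>_int (Sig i) = \<sigma>" "proj \<sigma>_int \<Gamma> = \<sigma>'"
    using assms(9) unfolding \<Gamma>_def par2_singletons_iff by auto
  assume \<sigma>: "\<sigma> \<in> projL L (Sig i)"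
  have "proj \<sigma>_int (Sig k) \<in> projL L (Sig k)" if k: "k \<in> {1..n}" for k
  proof (cases "k = i")
    case False
    then have "Sig k \<subseteq> \<Gamma>" using k unfolding \<Gamma>_def by auto
    then have "proj \<sigma>_int (Sig k) = proj \<sigma>' (Sig k)"
      using proj_proj_subset int(3) by metis
    also have "\<dots> \<in> Obs k" using assms(7) False k unfolding par_def by auto
    finally show ?thesis using assms(5) False k by auto
  qed (use \<sigma> int(2) in simp)
  moreover have "Sig i \<union> \<Gamma> = (\<Union>k\<in>{1..n}. Sig k)" using assms(4) unfolding \<Gamma>_def by auto
  ultimately show "\<sigma>_int \<in> L"
    using par_closed_under_projections int(1) unfolding L by metis
next
  assume "\<sigma>_int \<in> L"
  then show "\<sigma> \<in> projL L (Sig i)"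
    using assms(9) unfolding par2_singletons_iff projL_def by auto
qed

end
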